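(* For all integers $L,M\ge 0$, $$\sum_{i,j\in\mathbb Z}(-1)^{i+j}q^{\binom{i+j+1}{2}}\begin{bmatrix}2L+1\\ L-i\end{bmatrix}_q\begin{bmatrix}2M+1\\ M-j\end{bmatrix}_q=-(q;q)_{2L+1}\,\delta_{L,M}.$$
   Context: $q$ is a complex number with $|q|<1$ (or a formal variable). $(a;q)_n=\prod_{j=0}^{n-1}(1-aq^j)$ for $n\ge0$ (empty product $=1$), and $(q;q)_n$ is also written $(q)_n$. The Gaussian binomial is $\begin{bmatrix}n+m\\ n\end{bmatrix}_q=\frac{(q)_{n+m}}{(q)_n(q)_m}$ if $n,m$ are nonnegative integers and $0$ otherwise; hence only finitely many terms of the sum are nonzero. $\binom{x}{2}=x(x-1)/2$. $\delta_{L,M}$ is the Kronecker delta. *)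

theory Defs
  imports "HOL-Analysis.Analysis"
begin

definition qpoch :: "complex \<Rightarrow> complex \<Rightarrow> nat \<Rightarrow> complex" where
  "qpoch a q n = (\<Prod>j<n. (1 - a * q ^ j))"

definition gauss_binom :: "complex \<Rightarrow> int \<Rightarrow> int \<Rightarrow> complex" where
  "gauss_binom q n m =
     (if n \<ge> 0 \<and> m \<ge> 0
      then qpoch q q (nat (n + m)) / (qpoch q q (nat n) * qpoch q q (nat m))
      else 0)"

definition qbinom :: "complex \<Rightarrow> int \<Rightarrow> int \<Rightarrow> complex" where
  "qbinom q N K = gauss_binom q K (N - K)"

text \<open>binom(x,2) = x(x-1)/2 (always a nonnegative integer for integer x).\<close>
definition choose2 :: "int \<Rightarrow> int" where
  "choose2 x = x * (x - 1) div 2"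

end

theory Submission
  imports Defs
begin

(*
  For |q| < 1 all q-factorials are nonzero and the Gaussian
  binomials satisfy the q-Pascal rule [n+1;k] = [n;k] + q^(n+1-k) [n;k-1].
  From it one gets, for the alternating sum
      F_n(c) = sum_{b=0..n} (-1)^b q^binom(c-b,2) [n;b],
  the recurrence F_(n+1)(c) = (1 - q^(n+1-c)) F_n(c) whenever c <= n+1,
  so F_n(0) = (q)_n and F_n(c) = 0 for 1 <= c <= n (a q-analogue of the
  vanishing of finite differences).
  In the double sum, substituting b = M - j turns the inner sum over j into
  (-1)^(i+M) F_(2M+1)(i+M+1).  For L <= M every outer index i in [-L-1, L]
  has c = i+M+1 in [1, 2M+1], except i = -M-1 (c = 0), which occurs only
  when L = M and contributes -(q)_(2L+1).  The sum has finite support, which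
  gives the has_sum statement; the case L > M follows by swapping i and j.
*)

lemma qpoch_0 [simp]: "qpoch q q 0 = 1"
  by (simp add: qpoch_def)

lemma qpoch_Suc: "qpoch q q (Suc n) = qpoch q q n * (1 - q ^ Suc n)"
  by (simp add: qpoch_def)

text \<open>Positive powers of q stay inside the unit disc, so no factor of (q;q)_n vanishes.\<close>

lemma one_minus_power_Suc_nonzero:
  assumes "norm (q::complex) < 1"
  shows "1 - q ^ Suc n \<noteq> 0"
proof -
  have "norm (q ^ Suc n) < 1"
    using assms unfolding norm_power by (subst power_less_one_iff) auto
  then show ?thesis by auto
qed

lemma qpoch_nonzero:
  assumes "norm q < 1"
  shows "qpoch q q n \<noteq> 0"
proof (induction n)
  case (Suc n)
  then show ?case
    unfolding qpoch_Suc mult_eq_0_iff using one_minus_power_Suc_nonzero[OF assms, of n] by blast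
qed simp

lemma qbinom_nat:
  "qbinom q (int n) k =
    (if 0 \<le> k \<and> k \<le> int n then qpoch q q n / (qpoch q q (nat k) * qpoch q q (n - nat k)) else 0)"
  unfolding qbinom_def gauss_binom_def by (auto simp: nat_diff_distrib)

lemma qbinom_outside: "k < 0 \<or> N < k \<Longrightarrow> qbinom q N k = 0"
  by (auto simp: qbinom_def gauss_binom_def)

lemma qbinom_diag:
  assumes "norm q < 1" and "0 \<le> N"
  shows "qbinom q N N = 1"
  using qpoch_nonzero[OF assms(1), of "nat N"] assms(2) by (simp add: qbinom_def gauss_binom_def)

text \<open>The q-Pascal rule [m+d+2; m+1] = [m+d+1; m+1] + q^(d+1) [m+d+1; m], written out in
  q-factorials; it reduces to the identity 1 - xy = (1 - y) + y (1 - x) for x = q^(m+1), y = q^(d+1).\<close>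

lemma qpoch_pascal:
  assumes q: "norm q < 1"
  shows "qpoch q q (Suc (Suc (m + d))) / (qpoch q q (Suc m) * qpoch q q (Suc d))
       = qpoch q q (Suc (m + d)) / (qpoch q q (Suc m) * qpoch q q d)
         + q ^ Suc d * (qpoch q q (Suc (m + d)) / (qpoch q q m * qpoch q q (Suc d)))"
proof -
  define A B C x y where "A = qpoch q q (Suc (m + d))" and "B = qpoch q q m"
    and "C = qpoch q q d" and "x = q ^ Suc m" and "y = q ^ Suc d"
  have nz: "B \<noteq> 0" "C \<noteq> 0" "1 - x \<noteq> 0" "1 - y \<noteq> 0"
    using qpoch_nonzero[OF q] one_minus_power_Suc_nonzero[OF q]
    unfolding B_def C_def x_def y_def by auto
  have top: "qpoch q q (Suc (Suc (m + d))) = A * (1 - x * y)"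
    unfolding A_def x_def y_def qpoch_Suc[of q "Suc (m + d)"] by (simp add: power_add[symmetric])
  have left: "qpoch q q (Suc m) = B * (1 - x)" and right: "qpoch q q (Suc d) = C * (1 - y)"
    unfolding B_def C_def x_def y_def qpoch_Suc by simp_all
  have "A * (1 - x * y) / (B * (1 - x) * (C * (1 - y)))
      = A / (B * (1 - x) * C) + y * (A / (B * (C * (1 - y))))"
  proof -
    define u v where "u = 1 - x" and "v = 1 - y"
    have xy: "x = 1 - u" "y = 1 - v" unfolding u_def v_def by simp_all
    have "u \<noteq> 0" "v \<noteq> 0" using nz unfolding u_def v_def by auto
    then show ?thesis unfolding xy using nz(1,2) by (simp add: field_simps)
  qed
  then show ?thesis
    unfolding top left right A_def[symmetric] B_def[symmetric] C_def[symmetric] y_def[symmetric]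
    by (simp add: mult.assoc)
qed

lemma qbinom_pascal:
  assumes q: "norm q < 1"
  shows "qbinom q (int (Suc n)) k = qbinom q (int n) k + q ^ nat (int n + 1 - k) * qbinom q (int n) (k - 1)"
proof (cases "1 \<le> k \<and> k \<le> int n")
  case True
  define m d where "m = nat k - 1" and "d = n - nat k"
  have k: "k = int (Suc m)" and n: "n = Suc (m + d)" using True unfolding m_def d_def by auto
  have idx: "nat (int n + 1 - k) = Suc d" "nat k = Suc m" "nat (k - 1) = m"
       "Suc n - Suc m = Suc d" "n - Suc m = d" "n - m = Suc d"
    using k n by auto
  show ?thesis
    unfolding qbinom_nat idx using qpoch_pascal[OF q, of m d] True n by simp
next
  case False
  then consider "k \<le> 0" | "k = int n + 1" | "k > int n + 1" by linarith
  then show ?thesis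
    unfolding qbinom_nat by cases (auto simp: qpoch_nonzero[OF q] nat_add_distrib)
qed

text \<open>binom(x,2) is a nonnegative integer, so q^binom(x,2) may be written with a natural exponent,
  and it satisfies the Pascal step binom(x,2) = binom(x-1,2) + (x-1).\<close>

lemma choose2_nonneg: "0 \<le> choose2 x"
proof -
  have "0 \<le> x * (x - 1)"
    by (cases "x \<ge> 1") (auto simp: mult_nonpos_nonpos zero_le_mult_iff)
  then show ?thesis unfolding choose2_def by simp
qed

lemma choose2_step: "choose2 x = choose2 (x - 1) + (x - 1)"
proof -
  have "x * (x - 1) = (x - 1) * (x - 1 - 1) + 2 * (x - 1)" by (simp add: algebra_simps)
  then show ?thesis unfolding choose2_def by simp
qed

text \<open>F_n(c) = sum over b = 0..n of (-1)^b q^binom(c-b,2) [n;b]; the inner sum of the theorem is of this shape.\<close>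

definition qalt_sum :: "complex \<Rightarrow> nat \<Rightarrow> int \<Rightarrow> complex" where
  "qalt_sum q n c = (\<Sum>b\<le>n. (-1) ^ b * q ^ nat (choose2 (c - int b)) * qbinom q (int n) (int b))"

text \<open>Splitting [n+1;b] by q-Pascal and shifting b in the second part: the shifted terms are
  -q^(n+1-c) times the unshifted ones, because binom(c-b-1,2) + (n-b) = binom(c-b,2) + (n+1-c).\<close>

lemma qalt_sum_Suc:
  assumes q: "norm q < 1" and c: "c \<le> int n + 1"
  shows "qalt_sum q (Suc n) c = (1 - q ^ nat (int n + 1 - c)) * qalt_sum q n c"
proof -
  define t where "t b = (-1) ^ b * q ^ nat (choose2 (c - int b)) * qbinom q (int n) (int b)" for b
  define s where "s b = (-1) ^ b * q ^ nat (choose2 (c - int b))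
                          * (q ^ nat (int n + 1 - int b) * qbinom q (int n) (int b - 1))" for b
  have shifted: "s (Suc b) = - (q ^ nat (int n + 1 - c)) * t b" if "b \<le> n" for b
  proof -
    have "nat (choose2 (c - int (Suc b))) + nat (int n + 1 - int (Suc b))
        = nat (int n + 1 - c) + nat (choose2 (c - int b))"
      using choose2_step[of "c - int b"] choose2_nonneg[of "c - int b - 1"] choose2_nonneg[of "c - int b"]
        that c by (simp add: algebra_simps)
    then have "q ^ nat (choose2 (c - int (Suc b))) * q ^ nat (int n + 1 - int (Suc b))
             = q ^ nat (int n + 1 - c) * q ^ nat (choose2 (c - int b))"
      by (metis power_add)
    then show ?thesis unfolding s_def t_def by (simp add: algebra_simps)
  qed
  have "qalt_sum q (Suc n) c = (\<Sum>b\<le>Suc n. t b) + (\<Sum>b\<le>Suc n. s b)"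
    unfolding qalt_sum_def t_def s_def qbinom_pascal[OF q] sum.distrib[symmetric]
    by (simp add: algebra_simps)
  also have "(\<Sum>b\<le>Suc n. t b) = qalt_sum q n c"
    unfolding sum.atMost_Suc qalt_sum_def t_def by (simp add: qbinom_outside)
  also have "(\<Sum>b\<le>Suc n. s b) = (\<Sum>b\<le>n. s (Suc b))"
    unfolding sum.atMost_Suc_shift s_def by (simp add: qbinom_outside)
  also have "\<dots> = - (q ^ nat (int n + 1 - c)) * qalt_sum q n c"
    unfolding qalt_sum_def t_def[symmetric] sum_distrib_left by (rule sum.cong) (simp_all add: shifted)
  finally show ?thesis by (simp add: algebra_simps)
qed

text \<open>At c = 0 every recurrence factor is 1 - q^(n+1), so F_n(0) = (q;q)_n.\<close>

lemma qalt_sum_at_0: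
  assumes "norm q < 1"
  shows "qalt_sum q n 0 = qpoch q q n"
proof (induction n)
  case 0
  then show ?case by (simp add: qalt_sum_def qbinom_diag[OF assms, of 0] choose2_def)
next
  case (Suc n)
  then show ?case
    using qalt_sum_Suc[OF assms, of 0 n] by (simp add: qpoch_Suc nat_add_distrib mult.commute)
qed

text \<open>Vanishing: at c = n the recurrence factor 1 - q^0 kills F_n(c), and the recurrence propagates the zero upward.\<close>

lemma qalt_sum_vanishes:
  assumes q: "norm q < 1" and "1 \<le> c" "c \<le> int n"
  shows "qalt_sum q n c = 0"
  using assms(2,3)
proof (induction n)
  case (Suc n)
  show ?case
  proof (cases "c = int (Suc n)")
    case True
    then show ?thesis using qalt_sum_Suc[OF q, of c n] by simp
  next
    case False
    then show ?thesis using Suc qalt_sum_Suc[OF q, of c n] by simp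
  qed
qed simp

definition summand :: "complex \<Rightarrow> nat \<Rightarrow> nat \<Rightarrow> int \<times> int \<Rightarrow> complex" where
  "summand q L M = (\<lambda>(i, j). (-1) powi (i + j) * q ^ nat (choose2 (i + j + 1))
                     * qbinom q (2 * int L + 1) (int L - i) * qbinom q (2 * int M + 1) (int M - j))"

lemma summand_swap: "summand q L M = summand q M L \<circ> prod.swap"
  unfolding summand_def by (auto simp: fun_eq_iff add.commute mult.commute mult.left_commute)

lemma summand_outside_box:
  assumes "x \<notin> {-int L-1..int L} \<times> {-int M-1..int M}"
  shows "summand q L M x = 0"
proof -
  obtain i j where x: "x = (i, j)" by force
  have "int L - i < 0 \<or> 2 * int L + 1 < int L - i \<or> int M - j < 0 \<or> 2 * int M + 1 < int M - j"
    using assms x by auto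
  then show ?thesis
    unfolding x summand_def
    using qbinom_outside[of "int L - i" "2 * int L + 1" q] qbinom_outside[of "int M - j" "2 * int M + 1" q]
    by auto
qed

lemma inner_sum:
  "(\<Sum>j\<in>{-int M-1..int M}. (-1::complex) powi (i + j) * q ^ nat (choose2 (i + j + 1))
        * qbinom q (2 * int M + 1) (int M - j))
   = (-1) powi (i + int M) * qalt_sum q (2*M+1) (i + int M + 1)"
  unfolding qalt_sum_def sum_distrib_left
proof (rule sum.reindex_bij_witness[of _ "\<lambda>j. nat (int M - j)" "\<lambda>b. int M - int b", symmetric])
  fix b assume "b \<in> {..2*M+1}"
  show "(-1) powi (i + (int M - int b)) * q ^ nat (choose2 (i + (int M - int b) + 1))
          * qbinom q (2 * int M + 1) (int M - (int M - int b))
      = (-1) powi (i + int M) * ((-1) ^ b * q ^ nat (choose2 (i + int M + 1 - int b))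
          * qbinom q (int (2*M+1)) (int b))"
    by (simp add: power_int_minus_left minus_one_power_iff algebra_simps)
qed auto

text \<open>For L \<le> M only the outer index i = -M-1 (present iff L = M) survives.\<close>

lemma summand_box_sum:
  assumes q: "norm q < 1" and LM: "L \<le> M"
  shows "sum (summand q L M) ({-int L-1..int L} \<times> {-int M-1..int M})
       = - qpoch q q (2 * L + 1) * (if L = M then 1 else 0)"
proof -
  define g where "g i = qbinom q (2 * int L + 1) (int L - i)
                          * ((-1) powi (i + int M) * qalt_sum q (2*M+1) (i + int M + 1))" for i
  have box: "sum (summand q L M) ({-int L-1..int L} \<times> {-int M-1..int M}) = (\<Sum>i\<in>{-int L-1..int L}. g i)"
    unfolding sum.cartesian_product[symmetric] g_def inner_sum[symmetric] sum_distrib_left summand_def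
    by (rule sum.cong) (auto simp: algebra_simps intro!: sum.cong)
  have g_vanishes: "g i = 0" if "-int M \<le> i" "i \<le> int M" for i
    using that qalt_sum_vanishes[OF q, of "i + int M + 1" "2*M+1"] by (simp add: g_def)
  show ?thesis
  proof (cases "L = M")
    case True
    then have "{-int L-1..int L} = insert (-int M-1) {-int M..int M}" by auto
    then have "(\<Sum>i\<in>{-int L-1..int L}. g i) = g (-int M-1)"
      by (simp add: g_vanishes)
    also have "\<dots> = - qpoch q q (2 * L + 1)"
      using True qbinom_diag[OF q, of "2 * int M + 1"] qalt_sum_at_0[OF q, of "2*M+1"] by (simp add: g_def)
    finally show ?thesis using box True by simp
  next
    case False
    then have "(\<Sum>i\<in>{-int L-1..int L}. g i) = 0"
      using LM by (intro sum.neutral) (auto intro!: g_vanishes)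
    then show ?thesis using box False by simp
  qed
qed

lemma summand_has_sum:
  assumes q: "norm q < 1" and LM: "L \<le> M"
  shows "(summand q L M has_sum (- qpoch q q (2 * L + 1) * (if L = M then 1 else 0))) UNIV"
proof -
  have "(summand q L M has_sum (- qpoch q q (2 * L + 1) * (if L = M then 1 else 0)))
          ({-int L-1..int L} \<times> {-int M-1..int M})"
    using summand_box_sum[OF assms] by (intro has_sum_finiteI) auto
  then show ?thesis
    by (subst (asm) has_sum_cong_neutral[of _ _ "summand q L M"]) (auto simp: summand_outside_box)
qed

theorem mainTheorem1:
  fixes q :: complex and L M :: nat
  assumes "norm q < 1"
  shows "((\<lambda>(i::int, j::int).
            (-1::complex) powi (i + j) * q ^ nat (choose2 (i + j + 1))
            * qbinom q (2 * int L + 1) (int L - i)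
            * qbinom q (2 * int M + 1) (int M - j))
          has_sum (- qpoch q q (2 * L + 1) * (if L = M then 1 else 0))) UNIV"
proof (cases "L \<le> M")
  case True
  then show ?thesis using summand_has_sum[OF assms True] unfolding summand_def by simp
next
  case False
  have "(summand q M L has_sum 0) UNIV" using summand_has_sum[OF assms, of M L] False by simp
  then have "(summand q L M has_sum 0) UNIV"
    unfolding summand_swap[of q L M] using has_sum_reindex[of prod.swap UNIV "summand q M L" 0] by simp
  then show ?thesis using False unfolding summand_def by simp
qed

end
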